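(* Consider the structured private pooled-sequencing scheme with constant coverage depth described in the context, with $M\in\mathbb{N}$ unknown individuals, $M$ known individuals, base coverage $\alpha_0\in\mathbb{N}$, and per-read error probability $\eta\in(0,1/2)$. Let $\epsilon\in(0,1)$. If $$\frac{\alpha_0}{2^{M+1}-2}\geq\frac{8\eta(1-\eta)}{(1-2\eta)^2}\ln\left(\frac{1}{\epsilon}\right),$$ then the data collector can produce an estimate $\hat{\mathbf{X}}=\phi(\mathbf{Y},\mathcal{R})$ satisfying the reconstruction condition $\mathbb{P}(\hat{\mathbf{x}}_n\neq \mathbf{x}_n)\le\epsilon$ for every SNP position $n\in[N]$.
   Context: Setting. Each genome is described by $N$ SNP positions, each taking a binary value (0 = minor allele, 1 = major allele). There are $M$ "unknown" individuals indexed $m\in\{0,\dots,M-1\}$ whose SNPs form the matrix $\mathbf{X}\in\{0,1\}^{M\times N}$ with entries $X_{m,n}$ (unknown to everyone), and $K=M$ "known" individuals indexed $k\in\{0,\dots,M-1\}$ whose SNPs form $\mathbf{Y}\in\{0,1\}^{M\times N}$ with entries $Y_{k,n}$; $\mathbf{Y}$ is known to a trusted data collector but not to the sequencer, and its entries are i.i.d. uniform on $\{0,1\}$, independent of $\mathbf{X}$. Each genome is sheared into fragments; every fragment contains at most one SNP and can be mapped unambiguously to its SNP position. The data collector pools all fragments (without any label identifying the individual) and sends them to a sequencer, which reads each fragment and returns the set of reads $\mathcal{R}$; each read of a SNP is flipped ($0\leftrightarrow 1$) independently with probability $\eta$. In the structured scheme with constant coverage depth, for every SNP position $n$ the number of fragments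 covering position $n$ is exactly $2^m\alpha_0$ for unknown individual $m$ and exactly $2^k\alpha_0$ for known individual $k$, where $\alpha_0\in\mathbb{N}$. Thus for each position $n$ the reads reveal only the total count $\sum_{m}\sum_{i=1}^{2^m\alpha_0}(\tilde X_{m,n,i}+\tilde Y_{m,n,i})$ of read 1's, where $\tilde X_{m,n,i},\tilde Y_{m,n,i}$ are the noisy reads. As in the paper, the aggregated read noise is modeled via its central-limit (Gaussian) approximation: after normalization, the data collector observes $G_n=\sum_{m=0}^{M-1}2^mX_{m,n}+Z_n$ with $Z_n\sim\mathcal{N}(0,\sigma^2)$, $\sigma^2=\frac{2^{M+1}-2}{\alpha_0}\frac{\eta(1-\eta)}{(1-2\eta)^2}$. $\mathbf{x}_n$ and $\hat{\mathbf{x}}_n$ denote the $n$-th columns of $\mathbf{X}$ and $\hat{\mathbf{X}}$. *)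

theory Defs
  imports "HOL-Probability.Probability"
begin

text \<open>Variance of the Gaussian approximation of the normalized aggregated read noise
  in the structured scheme with constant coverage depth:
  sigma^2 = (2^(M+1) - 2)/alpha0 * eta(1-eta)/(1-2eta)^2.\<close>
definition noise_var :: "nat \<Rightarrow> nat \<Rightarrow> real \<Rightarrow> real" where
  "noise_var M alpha0 eta =
     (2 ^ (M + 1) - 2) / real alpha0 * (eta * (1 - eta) / (1 - 2 * eta)\<^sup>2)"

definition pooled_obs :: "nat \<Rightarrow> (nat \<Rightarrow> nat \<Rightarrow> nat) \<Rightarrow> (nat \<Rightarrow> 'a \<Rightarrow> real) \<Rightarrow> nat \<Rightarrow> 'a \<Rightarrow> real" where
  "pooled_obs M X Z n \<omega> = (\<Sum>m<M. 2 ^ m * real (X m n)) + Z n \<omega>"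

end

theory Submission
  imports Defs
begin

(* The data collector rounds G_n to the nearest integer and reads off its binary digits.
   Since G_n = c_n + Z_n with c_n = sum_m 2^m X_{m,n} an integer whose binary digits are
   exactly the X_{m,n}, the whole column x_n is recovered unless |Z_n| >= 1/2.  Shifting
   each Gaussian tail onto a half-line and using (t + u)^2 >= t^2 + u^2 when t u >= 0 gives
   P(|Z_n| >= t) <= exp (-t^2 / (2 sigma^2)); for t = 1/2 this is exp (-1 / (8 sigma^2)),
   and the coverage condition says precisely that this is at most epsilon. *)

lemma binary_sum_digit:
  fixes b :: "nat \<Rightarrow> nat"
  assumes "\<forall>i<M. b i \<le> 1" "m < M"
  shows "((\<Sum>i<M. 2 ^ i * b i) div 2 ^ m) mod 2 = b m"
  using assms
proof (induction M arbitrary: b m)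
  case 0
  then show ?case by simp
next
  case (Suc M)
  define S where "S = (\<Sum>i<M. 2 ^ i * b (Suc i))"
  have sum: "(\<Sum>i<Suc M. 2 ^ i * b i) = b 0 + 2 * S"
    unfolding S_def by (simp only: sum.lessThan_Suc_shift) (simp add: sum_distrib_left mult.assoc)
  have b0: "b 0 \<le> 1" using Suc.prems by simp
  show ?case
  proof (cases m)
    case 0
    then show ?thesis using sum b0 by simp
  next
    case (Suc k)
    have "(b 0 + 2 * S) div 2 = S"
      using b0 by simp
    then have "(b 0 + 2 * S) div 2 ^ m = S div 2 ^ k"
      using Suc by (simp add: div_mult2_eq)
    also have "(S div 2 ^ k) mod 2 = b m"
      using Suc.IH[of "\<lambda>i. b (Suc i)" k] Suc.prems \<open>m = Suc k\<close> unfolding S_def by auto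
    finally show ?thesis using sum by simp
  qed
qed

definition round_digit :: "real \<Rightarrow> nat \<Rightarrow> nat" where
  "round_digit x m = (nat \<lfloor>x + 1/2\<rfloor> div 2 ^ m) mod 2"

lemma round_digit_binary_sum:
  fixes b :: "nat \<Rightarrow> nat" and z :: real
  assumes "\<forall>i<M. b i \<le> 1" "m < M" "- (1/2) \<le> z" "z < 1/2"
  shows "round_digit ((\<Sum>i<M. 2 ^ i * real (b i)) + z) m = b m"
proof -
  define c where "c = (\<Sum>i<M. 2 ^ i * b i)"
  have "(\<Sum>i<M. 2 ^ i * real (b i)) = real c"
    unfolding c_def by simp
  moreover have "\<lfloor>real c + z + 1/2\<rfloor> = int c"
    using assms(3,4) by (intro floor_unique) auto
  moreover have "(c div 2 ^ m) mod 2 = b m"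
    unfolding c_def by (rule binary_sum_digit[OF assms(1,2)])
  ultimately show ?thesis
    unfolding round_digit_def by simp
qed

lemma measurable_round_digit:
  "(\<lambda>x. round_digit x m) \<in> borel \<rightarrow>\<^sub>M count_space UNIV"
proof -
  have "(\<lambda>x::real. \<lfloor>x + 1/2\<rfloor>) \<in> borel \<rightarrow>\<^sub>M count_space UNIV"
    by measurable
  then show ?thesis
    unfolding round_digit_def by (rule measurable_compose[OF _ measurable_count_space])
qed

lemma sets_round_digit_error:
  "{x. \<exists>m<d. round_digit x m \<noteq> b m} \<in> sets borel"
proof -
  have "{x. \<exists>m<d. round_digit x m \<noteq> b m} = (\<Union>m<d. (\<lambda>x. round_digit x m) -` (UNIV - {b m}))"
    by auto
  then show ?thesis
    by (auto intro!: measurable_sets[OF measurable_round_digit, simplified])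
qed

lemma normal_density_shift_le:
  fixes \<sigma> t u :: real
  assumes "\<sigma> > 0" "0 \<le> t * u"
  shows "normal_density 0 \<sigma> (t + u) \<le> exp (- t\<^sup>2 / (2 * \<sigma>\<^sup>2)) * normal_density 0 \<sigma> u"
proof -
  have "- (t + u)\<^sup>2 \<le> - t\<^sup>2 + - u\<^sup>2"
    using assms(2) by (simp add: power2_eq_square algebra_simps)
  then have "- (t + u)\<^sup>2 / (2 * \<sigma>\<^sup>2) \<le> (- t\<^sup>2 + - u\<^sup>2) / (2 * \<sigma>\<^sup>2)"
    by (rule divide_right_mono) simp
  then have "- (t + u)\<^sup>2 / (2 * \<sigma>\<^sup>2) \<le> - t\<^sup>2 / (2 * \<sigma>\<^sup>2) + - u\<^sup>2 / (2 * \<sigma>\<^sup>2)"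
    by (simp only: add_divide_distrib)
  then have "exp (- (t + u)\<^sup>2 / (2 * \<sigma>\<^sup>2)) \<le> exp (- t\<^sup>2 / (2 * \<sigma>\<^sup>2)) * exp (- u\<^sup>2 / (2 * \<sigma>\<^sup>2))"
    by (simp flip: exp_add)
  then show ?thesis
    unfolding normal_density_def by (simp add: divide_right_mono)
qed

lemma nn_integral_normal_density_shift_le:
  fixes \<sigma> t :: real and A :: "real set"
  assumes "\<sigma> > 0" "A \<in> sets borel" "\<And>x. x \<in> A \<Longrightarrow> 0 \<le> t * x"
  shows "(\<integral>\<^sup>+x. ennreal (normal_density 0 \<sigma> (t + x)) * indicator A x \<partial>lborel)
    \<le> exp (- t\<^sup>2 / (2 * \<sigma>\<^sup>2)) * (\<integral>\<^sup>+x. ennreal (normal_density 0 \<sigma> x) * indicator A x \<partial>lborel)"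
proof -
  have "(\<integral>\<^sup>+x. ennreal (normal_density 0 \<sigma> (t + x)) * indicator A x \<partial>lborel)
      \<le> (\<integral>\<^sup>+x. ennreal (exp (- t\<^sup>2 / (2 * \<sigma>\<^sup>2))) * (ennreal (normal_density 0 \<sigma> x) * indicator A x) \<partial>lborel)"
  proof (rule nn_integral_mono)
    fix x
    show "ennreal (normal_density 0 \<sigma> (t + x)) * indicator A x
        \<le> ennreal (exp (- t\<^sup>2 / (2 * \<sigma>\<^sup>2))) * (ennreal (normal_density 0 \<sigma> x) * indicator A x)"
      using normal_density_shift_le[OF assms(1) assms(3)]
      by (cases "x \<in> A") (simp_all add: ennreal_leI flip: ennreal_mult)
  qed
  also have "\<dots> = exp (- t\<^sup>2 / (2 * \<sigma>\<^sup>2)) * (\<integral>\<^sup>+x. ennreal (normal_density 0 \<sigma> x) * indicator A x \<partial>lborel)"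
    using assms(2) by (intro nn_integral_cmult) auto
  finally show ?thesis .
qed

lemma nn_integral_normal_density_tails_le:
  fixes \<sigma> t :: real
  assumes \<sigma>: "\<sigma> > 0" and t: "t > 0"
  shows "(\<integral>\<^sup>+x. ennreal (normal_density 0 \<sigma> x) * indicator ({..< -t} \<union> {t..}) x \<partial>lborel)
    \<le> exp (- t\<^sup>2 / (2 * \<sigma>\<^sup>2))"
proof -
  let ?f = "\<lambda>x. ennreal (normal_density 0 \<sigma> x)"
  let ?e = "ennreal (exp (- t\<^sup>2 / (2 * \<sigma>\<^sup>2)))"
  have "(\<integral>\<^sup>+x. ?f x * indicator ({..< -t} \<union> {t..}) x \<partial>lborel)
      = (\<integral>\<^sup>+x. ?f x * indicator {..< -t} x \<partial>lborel) + (\<integral>\<^sup>+x. ?f x * indicator {t..} x \<partial>lborel)"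
    using t by (subst nn_integral_add[symmetric]) (auto intro!: nn_integral_cong simp: indicator_def)
  also have "(\<integral>\<^sup>+x. ?f x * indicator {..< -t} x \<partial>lborel) = (\<integral>\<^sup>+x. ?f (- t + x) * indicator {..<0} x \<partial>lborel)"
    using nn_integral_real_affine[where c=1 and t="-t" and f="\<lambda>x. ?f x * indicator {..< -t} x"]
    by (simp add: indicator_def)
  also have "\<dots> \<le> ?e * (\<integral>\<^sup>+x. ?f x * indicator {..<0} x \<partial>lborel)"
    using nn_integral_normal_density_shift_le[OF \<sigma>, of "{..<0}" "- t"] t by (simp add: mult_le_0_iff)
  also have "(\<integral>\<^sup>+x. ?f x * indicator {t..} x \<partial>lborel) = (\<integral>\<^sup>+x. ?f (t + x) * indicator {0..} x \<partial>lborel)"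
    using nn_integral_real_affine[where c=1 and t=t and f="\<lambda>x. ?f x * indicator {t..} x"]
    by (simp add: indicator_def)
  also have "\<dots> \<le> ?e * (\<integral>\<^sup>+x. ?f x * indicator {0..} x \<partial>lborel)"
    using nn_integral_normal_density_shift_le[OF \<sigma>, of "{0..}" t] t by simp
  also have "?e * (\<integral>\<^sup>+x. ?f x * indicator {..<0} x \<partial>lborel) + ?e * (\<integral>\<^sup>+x. ?f x * indicator {0..} x \<partial>lborel)
      = ?e * (\<integral>\<^sup>+x. ?f x \<partial>lborel)"
  proof -
    have "(\<integral>\<^sup>+x. ?f x * indicator {..<0} x \<partial>lborel) + (\<integral>\<^sup>+x. ?f x * indicator {0..} x \<partial>lborel)
        = (\<integral>\<^sup>+x. ?f x \<partial>lborel)"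
      by (subst nn_integral_add[symmetric]) (auto intro!: nn_integral_cong simp: indicator_def)
    then show ?thesis
      by (simp flip: distrib_left)
  qed
  also have "(\<integral>\<^sup>+x. ?f x \<partial>lborel) = 1"
    using \<sigma> by (subst nn_integral_eq_integral) auto
  finally show ?thesis
    by (simp add: add_mono)
qed

lemma (in prob_space) normal_tails_prob_le:
  assumes Z: "distributed M lborel Z (normal_density 0 \<sigma>)" and \<sigma>: "\<sigma> > 0" and t: "t > 0"
  shows "prob (Z -` ({..< -t} \<union> {t..}) \<inter> space M) \<le> exp (- t\<^sup>2 / (2 * \<sigma>\<^sup>2))"
proof -
  have "ennreal (prob (Z -` ({..< -t} \<union> {t..}) \<inter> space M)) = emeasure M (Z -` ({..< -t} \<union> {t..}) \<inter> space M)"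
    by (simp add: emeasure_eq_measure)
  also have "\<dots> = (\<integral>\<^sup>+x. ennreal (normal_density 0 \<sigma> x) * indicator ({..< -t} \<union> {t..}) x \<partial>lborel)"
    by (rule distributed_emeasure[OF Z]) simp
  also have "\<dots> \<le> exp (- t\<^sup>2 / (2 * \<sigma>\<^sup>2))"
    by (rule nn_integral_normal_density_tails_le[OF \<sigma> t])
  finally show ?thesis
    by (simp add: ennreal_le_iff)
qed

lemma (in prob_space) round_digit_error_prob_le:
  fixes b :: "nat \<Rightarrow> nat" and v :: real
  assumes Z: "distributed M lborel Z (normal_density 0 (sqrt v))" and v: "v > 0"
    and bits: "\<forall>i<d. b i \<le> 1"
  defines "E \<equiv> {\<omega> \<in> space M. \<exists>m<d. round_digit ((\<Sum>i<d. 2 ^ i * real (b i)) + Z \<omega>) m \<noteq> b m}"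
  shows "E \<in> events" and "prob E \<le> exp (- 1 / (8 * v))"
proof -
  have Zm: "Z \<in> borel_measurable M"
    using distributed_measurable[OF Z] by simp
  have "E = (\<lambda>\<omega>. (\<Sum>i<d. 2 ^ i * real (b i)) + Z \<omega>) -` {x. \<exists>m<d. round_digit x m \<noteq> b m} \<inter> space M"
    unfolding E_def by blast
  also have "\<dots> \<in> events"
    using Zm by (intro measurable_sets[OF _ sets_round_digit_error]) simp
  finally show "E \<in> events" .
  have "E \<subseteq> Z -` ({..< -(1/2)} \<union> {1/2..}) \<inter> space M"
  proof
    fix \<omega> assume "\<omega> \<in> E"
    then show "\<omega> \<in> Z -` ({..< -(1/2)} \<union> {1/2..}) \<inter> space M"
      unfolding E_def using round_digit_binary_sum[OF bits, of _ "Z \<omega>"] by fastforce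
  qed
  then have "prob E \<le> prob (Z -` ({..< -(1/2)} \<union> {1/2..}) \<inter> space M)"
    using Zm by (intro finite_measure_mono) auto
  also have "\<dots> \<le> exp (- (1/2)\<^sup>2 / (2 * (sqrt v)\<^sup>2))"
    using v by (intro normal_tails_prob_le[OF Z]) auto
  finally show "prob E \<le> exp (- 1 / (8 * v))"
    using v by (simp add: power2_eq_square)
qed

lemma noise_var_tail_le:
  fixes M alpha0 :: nat and eta \<epsilon> :: real
  assumes eta: "0 < eta" "eta < 1/2" and eps: "0 < \<epsilon>" "\<epsilon> < 1"
    and cond: "real alpha0 / (2 ^ (M + 1) - 2)
                 \<ge> 8 * eta * (1 - eta) / (1 - 2 * eta)\<^sup>2 * ln (1 / \<epsilon>)"
  shows "0 < noise_var M alpha0 eta" and "exp (- 1 / (8 * noise_var M alpha0 eta)) \<le> \<epsilon>"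
proof -
  define r where "r = eta * (1 - eta) / (1 - 2 * eta)\<^sup>2"
  define D :: real where "D = 2 ^ (M + 1) - 2"
  define L where "L = ln (1 / \<epsilon>)"
  have r: "r > 0" and L: "L > 0"
    unfolding r_def L_def using eta eps by simp_all
  \<comment> \<open>For M = 0 the denominator D vanishes and cond fails, since x / 0 = 0.\<close>
  have c: "8 * r * L \<le> real alpha0 / D"
    using cond unfolding r_def D_def L_def by (simp add: mult.assoc)
  have "0 < 8 * r * L"
    using r L by simp
  then have "0 < real alpha0 / D"
    using c by linarith
  then have D: "D > 0" and a: "real alpha0 > 0"
    by (auto simp: zero_less_divide_iff)
  have v: "noise_var M alpha0 eta = D / real alpha0 * r"
    unfolding noise_var_def D_def r_def by simp
  then show "0 < noise_var M alpha0 eta"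
    using D a r by simp
  have "L \<le> 1 / (8 * noise_var M alpha0 eta)"
    using c D a r unfolding v by (simp add: field_simps)
  then have "- 1 / (8 * noise_var M alpha0 eta) \<le> ln \<epsilon>"
    unfolding L_def using eps by (simp add: ln_div)
  then show "exp (- 1 / (8 * noise_var M alpha0 eta)) \<le> \<epsilon>"
    using eps by (metis exp_le_cancel_iff exp_ln)
qed

theorem theorem1:
  fixes M N alpha0 :: nat and eta \<epsilon> :: real
  assumes eta: "0 < eta" "eta < 1/2"
    and eps: "0 < \<epsilon>" "\<epsilon> < 1"
    and cond: "real alpha0 / (2 ^ (M + 1) - 2)
                 \<ge> 8 * eta * (1 - eta) / (1 - 2 * eta)\<^sup>2 * ln (1 / \<epsilon>)"
  shows "\<exists>\<phi> :: (nat \<Rightarrow> real) \<Rightarrow> nat \<Rightarrow> nat \<Rightarrow> nat.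
    \<forall>(P :: 'a measure) (Z :: nat \<Rightarrow> 'a \<Rightarrow> real) (X :: nat \<Rightarrow> nat \<Rightarrow> nat).
      prob_space P
      \<longrightarrow> (\<forall>n<N. distributed P lborel (Z n) (normal_density 0 (sqrt (noise_var M alpha0 eta))))
      \<longrightarrow> prob_space.indep_vars P (\<lambda>_. borel) Z {..<N}
      \<longrightarrow> (\<forall>m<M. \<forall>n<N. X m n \<in> {0, 1})
      \<longrightarrow> (\<forall>n<N.
            let E = {\<omega> \<in> space P.
                       (\<exists>m<M. \<phi> (\<lambda>k. if k < N then pooled_obs M X Z k \<omega> else 0) m n \<noteq> X m n)}
            in E \<in> sets P \<and> measure P E \<le> \<epsilon>)"
proof -
  define v where "v = noise_var M alpha0 eta"
  have v: "v > 0" and tail_le_eps: "exp (- 1 / (8 * v)) \<le> \<epsilon>"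
    using noise_var_tail_le[OF eta eps cond] unfolding v_def by simp_all
  show ?thesis
  proof (intro exI[of _ "\<lambda>g m n. round_digit (g n) m"] allI impI)
    fix P :: "'a measure" and Z :: "nat \<Rightarrow> 'a \<Rightarrow> real" and X :: "nat \<Rightarrow> nat \<Rightarrow> nat" and n
    assume "prob_space P"
      and dist: "\<forall>n<N. distributed P lborel (Z n) (normal_density 0 (sqrt (noise_var M alpha0 eta)))"
      and bits: "\<forall>m<M. \<forall>n<N. X m n \<in> {0, 1}"
      and n: "n < N"
    interpret prob_space P by fact
    have Zn: "distributed P lborel (Z n) (normal_density 0 (sqrt v))"
      using dist n unfolding v_def by simp
    have "\<forall>i<M. X i n \<le> 1"
    proof (intro allI impI)
      fix i assume "i < M"
      then have "X i n \<in> {0, 1}"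
        using bits n by blast
      then show "X i n \<le> 1"
        by auto
    qed
    note error = round_digit_error_prob_le[OF Zn v this]
    have E_eq: "{\<omega> \<in> space P. \<exists>m<M. round_digit
            ((\<lambda>k. if k < N then pooled_obs M X Z k \<omega> else 0) n) m \<noteq> X m n}
        = {\<omega> \<in> space P. \<exists>m<M. round_digit ((\<Sum>i<M. 2 ^ i * real (X i n)) + Z n \<omega>) m \<noteq> X m n}"
      using n by (simp add: pooled_obs_def)
    show "let E = {\<omega> \<in> space P. \<exists>m<M. round_digit
                 ((\<lambda>k. if k < N then pooled_obs M X Z k \<omega> else 0) n) m \<noteq> X m n}
          in E \<in> sets P \<and> measure P E \<le> \<epsilon>"
      unfolding Let_def E_eq using error(1) order_trans[OF error(2) tail_le_eps] by (rule conjI)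
  qed
qed

end
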